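(* Let $X,Y$ be random variables on finite alphabets $\mathcal{X},\mathcal{Y}$ with $|\mathcal{X}|<|\mathcal{Y}|$ and joint pmf $P_{XY}$ whose marginals have all entries positive, and with $P_{X|Y}$ of full row rank. For $\epsilon\ge0$ define $g_{\epsilon}(X,Y)=\max\{I(U;Y): P_{U|Y},\ X-Y-U,\ \chi^2(P_{X|U=u}\|P_X)\le\epsilon^2\ \forall u\}$ and $f_{\epsilon}(X,Y)=\max\{I(U;Y): P_{U|Y},\ X-Y-U,\ \|P_{X|U=u}-P_X\|_1\le\epsilon\ \forall u\}$. Then $g_{\epsilon}(X,Y)\le f_{\epsilon}(X,Y)\le g_{\epsilon'}(X,Y)$, where $\epsilon'=\epsilon/\sqrt{\min_{x}P_X(x)}$.
   Context: $U$ ranges over random variables on finite alphabets, generated from $Y$ through a kernel $P_{U|Y}$ so that $P_{XYU}=P_{XY}P_{U|Y}$. $\chi^2(P\|Q)=\sum_x (P(x)-Q(x))^2/Q(x)$ and $\|\cdot\|_1$ is the $\ell_1$ norm. *)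

theory Defs
  imports Complex_Main
begin

text \<open>The auxiliary variable U takes values in the finite alphabet {..<n} (n :: nat),
  generated from Y by the kernel K u y = P_{U|Y}(u|y), so P_{XYU} = P_{XY} P_{U|Y}
  (hence X - Y - U is a Markov chain).\<close>

definition PX :: "('x::finite \<Rightarrow> 'y::finite \<Rightarrow> real) \<Rightarrow> 'x \<Rightarrow> real" where
  "PX P x = (\<Sum>y\<in>UNIV. P x y)"

definition PY :: "('x::finite \<Rightarrow> 'y::finite \<Rightarrow> real) \<Rightarrow> 'y \<Rightarrow> real" where
  "PY P y = (\<Sum>x\<in>UNIV. P x y)"

text \<open>Conditional pmf P_{X|Y}(x|y), viewed as the |X| x |Y| matrix with rows indexed by x.\<close>
definition PXgY :: "('x::finite \<Rightarrow> 'y::finite \<Rightarrow> real) \<Rightarrow> 'x \<Rightarrow> 'y \<Rightarrow> real" where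
  "PXgY P x y = P x y / PY P y"

definition full_row_rank :: "('x::finite \<Rightarrow> 'y::finite \<Rightarrow> real) \<Rightarrow> bool" where
  "full_row_rank M \<longleftrightarrow> (\<forall>c. (\<forall>y. (\<Sum>x\<in>UNIV. c x * M x y) = 0) \<longrightarrow> (\<forall>x. c x = 0))"

definition is_kernel :: "nat \<Rightarrow> (nat \<Rightarrow> 'y::finite \<Rightarrow> real) \<Rightarrow> bool" where
  "is_kernel n K \<longleftrightarrow> (\<forall>u y. 0 \<le> K u y) \<and> (\<forall>y. (\<Sum>u<n. K u y) = 1)"

definition PU :: "('x::finite \<Rightarrow> 'y::finite \<Rightarrow> real) \<Rightarrow> (nat \<Rightarrow> 'y \<Rightarrow> real) \<Rightarrow> nat \<Rightarrow> real" where
  "PU P K u = (\<Sum>y\<in>UNIV. PY P y * K u y)"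

definition PXgU :: "('x::finite \<Rightarrow> 'y::finite \<Rightarrow> real) \<Rightarrow> (nat \<Rightarrow> 'y \<Rightarrow> real) \<Rightarrow> nat \<Rightarrow> 'x \<Rightarrow> real" where
  "PXgU P K u x = (\<Sum>y\<in>UNIV. P x y * K u y) / PU P K u"

definition MI_UY :: "('x::finite \<Rightarrow> 'y::finite \<Rightarrow> real) \<Rightarrow> nat \<Rightarrow> (nat \<Rightarrow> 'y \<Rightarrow> real) \<Rightarrow> real" where
  "MI_UY P n K = (\<Sum>u<n. \<Sum>y\<in>UNIV.
      (let j = PY P y * K u y in if j = 0 then 0 else j * ln (j / (PU P K u * PY P y))))"

definition chi2 :: "('x::finite \<Rightarrow> real) \<Rightarrow> ('x \<Rightarrow> real) \<Rightarrow> real" where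
  "chi2 p q = (\<Sum>x\<in>UNIV. (p x - q x)^2 / q x)"

definition l1dist :: "('x::finite \<Rightarrow> real) \<Rightarrow> ('x \<Rightarrow> real) \<Rightarrow> real" where
  "l1dist p q = (\<Sum>x\<in>UNIV. \<bar>p x - q x\<bar>)"

text \<open>The constraint "for all u" ranges over letters u with P_U(u) > 0
  (P_{X|U=u} is undefined otherwise). The max is rendered as a supremum.\<close>
definition g_eps :: "('x::finite \<Rightarrow> 'y::finite \<Rightarrow> real) \<Rightarrow> real \<Rightarrow> real" where
  "g_eps P \<epsilon> = Sup {MI_UY P n K | n K. is_kernel n K \<and>
      (\<forall>u<n. PU P K u > 0 \<longrightarrow> chi2 (PXgU P K u) (PX P) \<le> \<epsilon>^2)}"

definition f_eps :: "('x::finite \<Rightarrow> 'y::finite \<Rightarrow> real) \<Rightarrow> real \<Rightarrow> real" where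
  "f_eps P \<epsilon> = Sup {MI_UY P n K | n K. is_kernel n K \<and>
      (\<forall>u<n. PU P K u > 0 \<longrightarrow> l1dist (PXgU P K u) (PX P) \<le> \<epsilon>)}"

end

theory Submission
  imports Defs "HOL-Analysis.Convex"
begin

text \<open>By Cauchy--Schwarz, \<open>\<parallel>p - q\<parallel>\<^sub>1\<^sup>2 \<le> \<chi>\<^sup>2(p\<parallel>q)\<close> for a probability vector \<open>q > 0\<close>; conversely
  \<open>(p x - q x)\<^sup>2 / q x \<le> \<bar>p x - q x\<bar> \<parallel>p - q\<parallel>\<^sub>1 / min q\<close> gives \<open>\<chi>\<^sup>2(p\<parallel>q) \<le> \<parallel>p - q\<parallel>\<^sub>1\<^sup>2 / min q\<close>.
  Hence the three sets of admissible kernels are nested. All of them contain the constant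
  kernel (for which \<open>P\<^sub>X\<^sub>|\<^sub>U = P\<^sub>X\<close>) and \<open>I(U;Y) \<le> H(Y)\<close> bounds them, so their suprema are
  ordered accordingly.\<close>

lemma l1dist_nonneg: "0 \<le> l1dist p q"
  unfolding l1dist_def by (intro sum_nonneg) simp

lemma l1dist_squared_le_chi2:
  fixes p q :: "'x::finite \<Rightarrow> real"
  assumes q_pos: "\<And>x. q x > 0" and q_sum: "(\<Sum>x\<in>UNIV. q x) = 1"
  shows "(l1dist p q)\<^sup>2 \<le> chi2 p q"
proof -
  have q_ne: "q x \<noteq> 0" for x using q_pos[of x] by simp
  have "(l1dist p q)\<^sup>2 = (\<Sum>x\<in>UNIV. (\<bar>p x - q x\<bar> / sqrt (q x)) * sqrt (q x))\<^sup>2"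
    unfolding l1dist_def using q_pos by (simp add: less_imp_le q_ne)
  also have "\<dots> \<le> (\<Sum>x\<in>UNIV. (\<bar>p x - q x\<bar> / sqrt (q x))\<^sup>2) * (\<Sum>x\<in>UNIV. (sqrt (q x))\<^sup>2)"
    by (rule Cauchy_Schwarz_ineq_sum)
  also have "\<dots> = chi2 p q"
    unfolding chi2_def using q_pos q_sum by (simp add: power_divide less_imp_le)
  finally show ?thesis .
qed

lemma chi2_le_l1dist_squared_div:
  fixes p q :: "'x::finite \<Rightarrow> real"
  assumes m_pos: "m > 0" and q_ge: "\<And>x. q x \<ge> m"
  shows "chi2 p q \<le> (l1dist p q)\<^sup>2 / m"
proof -
  have "chi2 p q \<le> (\<Sum>x\<in>UNIV. \<bar>p x - q x\<bar> * \<bar>p x - q x\<bar>) / m"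
    unfolding chi2_def sum_divide_distrib using m_pos q_ge
    by (intro sum_mono) (simp add: frac_le abs_mult_self_eq power2_eq_square)
  also have "\<dots> \<le> (\<Sum>x\<in>UNIV. \<bar>p x - q x\<bar> * l1dist p q) / m"
    unfolding l1dist_def using m_pos
    by (intro divide_right_mono sum_mono mult_left_mono member_le_sum) auto
  also have "\<dots> = (l1dist p q)\<^sup>2 / m"
    by (simp add: sum_distrib_right[symmetric] power2_eq_square l1dist_def)
  finally show ?thesis .
qed

lemma chi2_self [simp]: "chi2 q q = 0"
  unfolding chi2_def by simp

lemma l1dist_self [simp]: "l1dist q q = 0"
  unfolding l1dist_def by simp

lemma l1dist_le_if_chi2_le:
  fixes p q :: "'x::finite \<Rightarrow> real"
  assumes "\<And>x. q x > 0" "(\<Sum>x\<in>UNIV. q x) = 1" and "0 \<le> \<epsilon>" "chi2 p q \<le> \<epsilon>\<^sup>2"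
  shows "l1dist p q \<le> \<epsilon>"
  using l1dist_squared_le_chi2[of q p] assms by (auto intro: power2_le_imp_le)

lemma chi2_le_if_l1dist_le:
  fixes p q :: "'x::finite \<Rightarrow> real"
  assumes m_pos: "m > 0" and q_ge: "\<And>x. q x \<ge> m" and l1_le: "l1dist p q \<le> \<epsilon>"
  shows "chi2 p q \<le> (\<epsilon> / sqrt m)\<^sup>2"
proof -
  have "chi2 p q \<le> (l1dist p q)\<^sup>2 / m"
    using m_pos q_ge by (rule chi2_le_l1dist_squared_div)
  also have "\<dots> \<le> \<epsilon>\<^sup>2 / m"
    using l1_le l1dist_nonneg m_pos by (intro divide_right_mono power_mono) auto
  finally show ?thesis using m_pos by (simp add: power_divide)
qed

lemma mutual_information_summand_le:
  fixes a b k :: real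
  assumes "0 \<le> b" "0 \<le> k" "b * k \<le> a"
  shows "(let j = b * k in if j = 0 then 0 else j * ln (j / (a * b))) \<le> - (b * k) * ln b"
proof (cases "b * k = 0")
  case False
  with assms have b_pos: "b > 0" and j_pos: "b * k > 0"
    by (auto simp: zero_less_mult_iff)
  with assms have a_pos: "a > 0" by linarith
  have "(b * k) / (a * b) \<le> 1 / b"
    using assms b_pos a_pos by (simp add: divide_simps mult.commute)
  then have "ln ((b * k) / (a * b)) \<le> ln (1 / b)"
    using j_pos a_pos b_pos by (intro ln_mono) (auto simp: zero_less_mult_iff)
  then have "ln ((b * k) / (a * b)) \<le> - ln b"
    using b_pos by (simp add: ln_div)
  then have "(b * k) * ln ((b * k) / (a * b)) \<le> (b * k) * - ln b"
    using j_pos by (intro mult_left_mono) auto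
  then show ?thesis
    using False by simp
qed auto

lemma MI_UY_le_entropy_Y:
  fixes P :: "'x::finite \<Rightarrow> 'y::finite \<Rightarrow> real"
  assumes PY_nonneg: "\<And>y. PY P y \<ge> 0" and kernel: "is_kernel n K"
  shows "MI_UY P n K \<le> (\<Sum>y\<in>UNIV. - PY P y * ln (PY P y))"
proof -
  have K_nonneg: "\<And>u y. 0 \<le> K u y" and K_sum: "\<And>y. (\<Sum>u<n. K u y) = 1"
    using kernel unfolding is_kernel_def by auto
  have joint_le_PU: "PY P y * K u y \<le> PU P K u" for u y
    unfolding PU_def using PY_nonneg K_nonneg
    by (intro member_le_sum[where f = "\<lambda>y. PY P y * K u y"]) auto
  have "MI_UY P n K \<le> (\<Sum>u<n. \<Sum>y\<in>UNIV. - (PY P y * K u y) * ln (PY P y))"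
    unfolding MI_UY_def using PY_nonneg K_nonneg joint_le_PU
    by (intro sum_mono mutual_information_summand_le)
  also have "\<dots> = (\<Sum>y\<in>UNIV. - PY P y * ln (PY P y) * (\<Sum>u<n. K u y))"
    by (subst sum.swap) (simp add: sum_distrib_left sum_negf mult_ac)
  also have "\<dots> = (\<Sum>y\<in>UNIV. - PY P y * ln (PY P y))"
    using K_sum by simp
  finally show ?thesis .
qed

definition admissible_MI :: "('x::finite \<Rightarrow> 'y::finite \<Rightarrow> real) \<Rightarrow> (('x \<Rightarrow> real) \<Rightarrow> bool) \<Rightarrow> real set"
  where "admissible_MI P C =
    {MI_UY P n K | n K. is_kernel n K \<and> (\<forall>u<n. PU P K u > 0 \<longrightarrow> C (PXgU P K u))}"

lemma g_eps_eq_Sup_admissible_MI: "g_eps P \<epsilon> = Sup (admissible_MI P (\<lambda>p. chi2 p (PX P) \<le> \<epsilon>\<^sup>2))"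
  unfolding g_eps_def admissible_MI_def ..

lemma f_eps_eq_Sup_admissible_MI: "f_eps P \<epsilon> = Sup (admissible_MI P (\<lambda>p. l1dist p (PX P) \<le> \<epsilon>))"
  unfolding f_eps_def admissible_MI_def ..

lemma admissible_MI_mono: "(\<And>p. C p \<Longrightarrow> D p) \<Longrightarrow> admissible_MI P C \<subseteq> admissible_MI P D"
  unfolding admissible_MI_def by blast

lemma admissible_MI_nonempty:
  fixes P :: "'x::finite \<Rightarrow> 'y::finite \<Rightarrow> real"
  assumes "(\<Sum>x\<in>UNIV. \<Sum>y\<in>UNIV. P x y) = 1" and "C (PX P)"
  shows "admissible_MI P C \<noteq> {}"
proof -
  define K :: "nat \<Rightarrow> 'y \<Rightarrow> real" where "K = (\<lambda>u y. 1)"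
  have "(\<Sum>y\<in>UNIV. PY P y) = 1"
    unfolding PY_def using assms(1) by (subst sum.swap) simp
  then have "PU P K 0 = 1"
    unfolding PU_def K_def by simp
  then have "PXgU P K 0 = PX P"
    unfolding PXgU_def K_def PX_def by simp
  moreover have "is_kernel 1 K"
    unfolding is_kernel_def K_def by simp
  ultimately have "MI_UY P 1 K \<in> admissible_MI P C"
    unfolding admissible_MI_def using assms(2) by force
  then show ?thesis by blast
qed

lemma bdd_above_admissible_MI:
  assumes "\<And>y. PY P y \<ge> 0"
  shows "bdd_above (admissible_MI P C)"
  unfolding admissible_MI_def
  by (rule bdd_aboveI[where M = "\<Sum>y\<in>UNIV. - PY P y * ln (PY P y)"])
    (use MI_UY_le_entropy_Y[OF assms] in blast)

lemma Sup_admissible_MI_mono: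
  assumes "(\<Sum>x\<in>UNIV. \<Sum>y\<in>UNIV. P x y) = 1" "\<And>y. PY P y \<ge> 0"
    and "C (PX P)" and "\<And>p. C p \<Longrightarrow> D p"
  shows "Sup (admissible_MI P C) \<le> Sup (admissible_MI P D)"
  using assms by (intro cSup_subset_mono admissible_MI_nonempty bdd_above_admissible_MI
      admissible_MI_mono) auto

theorem corollary1:
  fixes P :: "'x::finite \<Rightarrow> 'y::finite \<Rightarrow> real" and \<epsilon> :: real
  assumes "card (UNIV :: 'x set) < card (UNIV :: 'y set)"
    and "\<forall>x y. 0 \<le> P x y"
    and "(\<Sum>x\<in>UNIV. \<Sum>y\<in>UNIV. P x y) = 1"
    and "\<forall>x. PX P x > 0"
    and "\<forall>y. PY P y > 0"
    and "full_row_rank (PXgY P)"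
    and "\<epsilon> \<ge> 0"
  shows "g_eps P \<epsilon> \<le> f_eps P \<epsilon> \<and>
         f_eps P \<epsilon> \<le> g_eps P (\<epsilon> / sqrt (Min (range (PX P))))"
proof -
  note total = assms(3) and \<epsilon>_nonneg = assms(7)
  have PX_pos: "PX P x > 0" for x using assms(4) by simp
  have PY_nonneg: "PY P y \<ge> 0" for y using assms(5) by (simp add: less_imp_le)
  have PX_sum: "(\<Sum>x\<in>UNIV. PX P x) = 1" using total unfolding PX_def .
  have Min_PX_pos: "Min (range (PX P)) > 0" using PX_pos by (subst Min_gr_iff) auto
  have PX_ge_Min: "PX P x \<ge> Min (range (PX P))" for x by simp
  have "g_eps P \<epsilon> \<le> f_eps P \<epsilon>"
    unfolding g_eps_eq_Sup_admissible_MI f_eps_eq_Sup_admissible_MI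
    using total PY_nonneg \<epsilon>_nonneg
    by (intro Sup_admissible_MI_mono l1dist_le_if_chi2_le[OF PX_pos PX_sum]) auto
  moreover have "f_eps P \<epsilon> \<le> g_eps P (\<epsilon> / sqrt (Min (range (PX P))))"
    unfolding g_eps_eq_Sup_admissible_MI f_eps_eq_Sup_admissible_MI
    using total PY_nonneg \<epsilon>_nonneg
    by (intro Sup_admissible_MI_mono chi2_le_if_l1dist_le[OF Min_PX_pos PX_ge_Min]) auto
  ultimately show ?thesis ..
qed

end
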